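(* Let $n=2m$. Let $S_1=\{\bm{v}\in\mathbb{F}_{q^n}^n:\mathcal{P}_n(\bm{v})\in GL_n(\mathbb{F}_{q^n})\}$ and $S_2=\{\bm{v}\in\mathbb{F}_{q^m}^n:\mathcal{P}_n(\bm{v})\in GL_n(\mathbb{F}_{q^m})\}$. Let $T=\{\bm{v}\in\mathbb{F}_{q^n}^n:\mathrm{wt}_{q^m}(\bm{v})=2\text{ and }\mathcal{P}_n(\bm{v})\in GL_n(\mathbb{F}_{q^n})\}$ and let $\mathcal{N}$ be the number of distinct equivalence classes $\overline{\bm{v}}$ with $\bm{v}\in T$. Then $$\mathcal{N}=\frac{|S_1|}{|S_2|}-q^m-1.$$
   Context: $q$ is a prime power (the paper takes $q$ a power of $2$). For $\bm{v}=(v_0,\dots,v_{n-1})$, the circulant matrix $\mathcal{P}_n(\bm{v})$ is the $n\times n$ matrix with rows $(v_0,\dots,v_{n-1}),(v_{n-1},v_0,\dots,v_{n-2}),\dots,(v_1,\dots,v_{n-1},v_0)$ (each row the cyclic right shift of the previous one). $\mathcal{P}_n(\mathbb{F}_{q^m})$ denotes the set of $n\times n$ circulant matrices over $\mathbb{F}_{q^m}$. For $\bm{v}\in\mathbb{F}_{q^n}^n$, $\mathrm{wt}_{q^m}(\bm{v})$ is the dimension over $\mathbb{F}_{q^m}$ of the $\mathbb{F}_{q^m}$-linear span of the components of $\bm{v}$ (so it is $0,1$ or $2$). The equivalence class of $\bm{v}\in\mathbb{F}_{q^n}^n$ is $\overline{\bm{v}}=\{\bm{v}Q: Q\in\mathcal{P}_n(\mathbb{F}_{q^m})\cap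 GL_n(\mathbb{F}_{q^m})\}$. *)

theory Defs
  imports Main "HOL-Computational_Algebra.Primes" "Jordan_Normal_Form.Matrix"
begin

definition circulant :: "nat \<Rightarrow> 'a vec \<Rightarrow> 'a mat" where
  "circulant n v = mat n n (\<lambda>(i,j). v $ ((j + n - i) mod n))"

definition mat_over :: "'a set \<Rightarrow> 'a mat \<Rightarrow> bool" where
  "mat_over K A \<longleftrightarrow> (\<forall>i<dim_row A. \<forall>j<dim_col A. A $$ (i,j) \<in> K)"

definition GL_over :: "'a::field set \<Rightarrow> nat \<Rightarrow> 'a mat set" where
  "GL_over K n = {A \<in> carrier_mat n n. mat_over K A \<and>
      (\<exists>B \<in> carrier_mat n n. mat_over K B \<and> A * B = 1\<^sub>m n \<and> B * A = 1\<^sub>m n)}"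

definition is_subfield :: "'a::field set \<Rightarrow> bool" where
  "is_subfield K \<longleftrightarrow> 0 \<in> K \<and> 1 \<in> K \<and> (\<forall>x\<in>K. \<forall>y\<in>K. x + y \<in> K \<and> x * y \<in> K \<and> x - y \<in> K)
     \<and> (\<forall>x\<in>K. x \<noteq> 0 \<longrightarrow> inverse x \<in> K)"

definition K_span :: "'a::field set \<Rightarrow> 'a set \<Rightarrow> 'a set" where
  "K_span K B = {\<Sum>b\<in>B. c b * b | c. \<forall>b\<in>B. c b \<in> K}"

definition wt_over :: "'a::field set \<Rightarrow> 'a vec \<Rightarrow> nat" where
  "wt_over K v = (LEAST d. \<exists>B. finite B \<and> card B = d \<and>
       (\<forall>i<dim_vec v. v $ i \<in> K_span K B))"

definition vec_mat_mult :: "'a::semiring_0 vec \<Rightarrow> 'a mat \<Rightarrow> 'a vec" where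
  "vec_mat_mult v Q = vec (dim_col Q) (\<lambda>j. v \<bullet> col Q j)"

definition eq_class :: "'a::field set \<Rightarrow> nat \<Rightarrow> 'a vec \<Rightarrow> 'a vec set" where
  "eq_class K n v = {vec_mat_mult v Q | Q. \<exists>w \<in> carrier_vec n. (\<forall>i<n. w $ i \<in> K)
        \<and> Q = circulant n w \<and> Q \<in> GL_over K n}"

end

theory Submission
  imports Defs
begin

text \<open>
  Circulant matrices multiply like cyclic convolution of their first rows, so \<open>P\<^sub>n(v)\<close>
  is invertible over a subfield K exactly when v is a unit of the convolution algebra
  \<open>K[x]/(x\<^sup>n - 1)\<close>, and the class of v is the coset \<open>v U\<^sub>K\<close> of the group \<open>U\<^sub>K\<close> of these units.
  All cosets have \<open>|U\<^sub>K|\<close> elements, so \<open>|S\<^sub>1| / |S\<^sub>2|\<close> is the number of classes of units over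
  the big field F. Since \<open>[F : K] = 2\<close> every vector has weight at most 2, and weight at most 1
  exactly when it is a scalar a times a K-valued vector. Such a unit has class \<open>a U\<^sub>K\<close>, and
  \<open>a U\<^sub>K = b U\<^sub>K\<close> iff \<open>b / a \<in> K\<^sup>*\<close>, so these classes are counted by
  \<open>|F\<^sup>*| / |K\<^sup>*| = q\<^sup>m + 1\<close>; the remaining classes are those of weight 2.
\<close>

lemma int_cyclic_diff:
  fixes i j n :: nat
  assumes "i \<le> n"
  shows "int ((j + n - i) mod n) = (int j - int i) mod int n"
proof -
  have "int (j + n - i) = (int j - int i) + int n" using assms by simp
  then show ?thesis by (simp add: zmod_int)
qed

lemma cyclic_diff_diff:
  fixes i j k n :: nat
  assumes "i < n" "j < n" "k < n"
  shows "((j + n - i) mod n + n - (k + n - i) mod n) mod n = (j + n - k) mod n"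
proof -
  have "(k + n - i) mod n \<le> n" using assms by (simp add: less_imp_le)
  then have "int (((j + n - i) mod n + n - (k + n - i) mod n) mod n)
      = ((int j - int i) mod int n - (int k - int i) mod int n) mod int n"
    using assms by (simp add: int_cyclic_diff)
  also have "\<dots> = (int j - int k) mod int n" by (simp add: mod_diff_eq)
  also have "\<dots> = int ((j + n - k) mod n)" using assms by (simp add: int_cyclic_diff)
  finally show ?thesis by simp
qed

lemma cyclic_diff_cancel:
  fixes i j n :: nat
  assumes "i < n" "j < n"
  shows "(j + n - (j + n - i) mod n) mod n = i"
proof -
  have "(j + n - i) mod n \<le> n" using assms by (simp add: less_imp_le)
  then have "int ((j + n - (j + n - i) mod n) mod n) = (int j - (int j - int i) mod int n) mod int n"
    using assms by (simp add: int_cyclic_diff)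
  also have "\<dots> = (int j - (int j - int i)) mod int n" by (rule mod_diff_right_eq)
  also have "\<dots> = int i" using assms by simp
  finally show ?thesis by simp
qed

lemma cyclic_diff_eq_0_iff:
  fixes i j n :: nat
  assumes "i < n" "j < n"
  shows "(j + n - i) mod n = 0 \<longleftrightarrow> i = j"
  using cyclic_diff_cancel[OF assms] assms by auto

lemma cyclic_shift_cancel:
  fixes i k n :: nat
  assumes "i < n"
  shows "((k + n - i) mod n + i) mod n = k mod n"
proof -
  have "int (((k + n - i) mod n + i) mod n) = (int ((k + n - i) mod n) + int i) mod int n"
    by (simp only: of_nat_mod of_nat_add)
  also have "\<dots> = ((int k - int i) mod int n + int i) mod int n"
    using assms by (simp only: int_cyclic_diff less_imp_le)
  also have "\<dots> = int (k mod n)" by (simp add: mod_add_left_eq zmod_int)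
  finally show ?thesis by (simp only: of_nat_eq_iff)
qed

lemma cyclic_add_cancel:
  fixes i k n :: nat
  assumes "i < n" "k < n"
  shows "((k + i) mod n + n - i) mod n = k"
proof -
  have "int (((k + i) mod n + n - i) mod n) = (int ((k + i) mod n) - int i) mod int n"
    using assms by (simp only: int_cyclic_diff less_imp_le)
  also have "\<dots> = ((int k + int i) mod int n - int i) mod int n" by (simp only: zmod_int of_nat_add)
  also have "\<dots> = (int k + int i - int i) mod int n" by (rule mod_diff_left_eq)
  also have "\<dots> = int k" using assms by simp
  finally show ?thesis by (simp only: of_nat_eq_iff)
qed

definition cyclic_conv :: "nat \<Rightarrow> 'a::comm_ring_1 vec \<Rightarrow> 'a vec \<Rightarrow> 'a vec" where
  "cyclic_conv n v w = vec n (\<lambda>j. \<Sum>i<n. v $ i * w $ ((j + n - i) mod n))"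

lemma cyclic_conv_carrier [simp]:
  "cyclic_conv n v w \<in> carrier_vec n" "dim_vec (cyclic_conv n v w) = n"
  by (auto simp: cyclic_conv_def)

lemma index_cyclic_conv:
  "j < n \<Longrightarrow> cyclic_conv n v w $ j = (\<Sum>i<n. v $ i * w $ ((j + n - i) mod n))"
  by (simp add: cyclic_conv_def)

lemma cyclic_conv_commute: "cyclic_conv n v w = cyclic_conv n w v"
proof (rule eq_vecI)
  fix j assume "j < dim_vec (cyclic_conv n w v)"
  then have j: "j < n" by simp
  have "(\<Sum>i<n. v $ i * w $ ((j + n - i) mod n)) = (\<Sum>k<n. w $ k * v $ ((j + n - k) mod n))"
    by (rule sum.reindex_bij_witness[where i = "\<lambda>k. (j + n - k) mod n" and j = "\<lambda>i. (j + n - i) mod n"])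
      (auto simp: j cyclic_diff_cancel mult.commute)
  then show "cyclic_conv n v w $ j = cyclic_conv n w v $ j" using j by (simp add: index_cyclic_conv)
qed simp

lemma vec_mat_mult_circulant:
  "dim_vec v = n \<Longrightarrow> vec_mat_mult v (circulant n w) = cyclic_conv n v w"
  unfolding vec_mat_mult_def circulant_def cyclic_conv_def
  by (rule eq_vecI) (auto simp: scalar_prod_def atLeast0LessThan)

lemma vec_mat_mult_assoc:
  assumes "dim_vec v = dim_row A" "dim_col A = dim_row B"
  shows "vec_mat_mult (vec_mat_mult v A) B = vec_mat_mult v (A * B)"
proof (rule eq_vecI)
  fix j assume "j < dim_vec (vec_mat_mult v (A * B))"
  then have j: "j < dim_col B" by (simp add: vec_mat_mult_def)
  have "vec_mat_mult (vec_mat_mult v A) B $ j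
      = (\<Sum>k<dim_col A. \<Sum>i<dim_row A. v $ i * (A $$ (i,k) * B $$ (k,j)))"
    using assms j
    by (simp add: vec_mat_mult_def scalar_prod_def atLeast0LessThan sum_distrib_right mult.assoc)
  also have "\<dots> = (\<Sum>i<dim_row A. \<Sum>k<dim_col A. v $ i * (A $$ (i,k) * B $$ (k,j)))"
    by (rule sum.swap)
  also have "\<dots> = vec_mat_mult v (A * B) $ j"
    using assms j
    by (simp add: vec_mat_mult_def scalar_prod_def atLeast0LessThan row_def sum_distrib_left)
  finally show "vec_mat_mult (vec_mat_mult v A) B $ j = vec_mat_mult v (A * B) $ j" .
qed (simp add: vec_mat_mult_def)

lemma vec_mat_mult_one: "dim_vec (v :: 'a::semiring_1 vec) = n \<Longrightarrow> vec_mat_mult v (1\<^sub>m n) = v"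
  by (rule eq_vecI) (auto simp: vec_mat_mult_def scalar_prod_def atLeast0LessThan if_distrib
      cong: if_cong)

lemma circulant_mult: "circulant n v * circulant n w = circulant n (cyclic_conv n v w)"
proof (rule eq_matI)
  fix i j assume "i < dim_row (circulant n (cyclic_conv n v w))"
    "j < dim_col (circulant n (cyclic_conv n v w))"
  then have i: "i < n" and j: "j < n" by (auto simp: circulant_def)
  have "(circulant n v * circulant n w) $$ (i,j)
      = (\<Sum>k<n. v $ ((k + n - i) mod n) * w $ (((j + n - i) mod n + n - (k + n - i) mod n) mod n))"
    using i j by (simp add: circulant_def scalar_prod_def atLeast0LessThan cyclic_diff_diff)
  also have "\<dots> = (\<Sum>l<n. v $ l * w $ (((j + n - i) mod n + n - l) mod n))"
    by (rule sum.reindex_bij_witness[where i = "\<lambda>l. (l + i) mod n" and j = "\<lambda>k. (k + n - i) mod n"])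
      (auto simp: i cyclic_shift_cancel cyclic_add_cancel)
  also have "\<dots> = circulant n (cyclic_conv n v w) $$ (i,j)"
    using i j by (simp add: circulant_def index_cyclic_conv)
  finally show "(circulant n v * circulant n w) $$ (i,j) = circulant n (cyclic_conv n v w) $$ (i,j)" .
qed (auto simp: circulant_def)

lemma cyclic_conv_assoc:
  assumes "dim_vec u = n"
  shows "cyclic_conv n (cyclic_conv n u v) w = cyclic_conv n u (cyclic_conv n v w)"
proof -
  have "cyclic_conv n (cyclic_conv n u v) w = vec_mat_mult (vec_mat_mult u (circulant n v)) (circulant n w)"
    using assms by (simp add: vec_mat_mult_circulant)
  also have "\<dots> = vec_mat_mult u (circulant n v * circulant n w)"
    using assms by (simp add: vec_mat_mult_assoc circulant_def)
  finally show ?thesis using assms by (simp add: circulant_mult vec_mat_mult_circulant)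
qed

lemma cyclic_conv_interchange:
  assumes "dim_vec a = n" "dim_vec b = n" "dim_vec c = n"
  shows "cyclic_conv n (cyclic_conv n a b) (cyclic_conv n c d)
       = cyclic_conv n (cyclic_conv n a c) (cyclic_conv n b d)"
proof -
  have "cyclic_conv n b (cyclic_conv n c d) = cyclic_conv n (cyclic_conv n b c) d"
    using assms by (simp add: cyclic_conv_assoc)
  also have "\<dots> = cyclic_conv n c (cyclic_conv n b d)"
    using assms by (simp add: cyclic_conv_commute[of n b c] cyclic_conv_assoc)
  finally show ?thesis using assms by (simp add: cyclic_conv_assoc)
qed

lemma circulant_unit_vec: "0 < n \<Longrightarrow> circulant n (unit_vec n 0) = 1\<^sub>m n"
  by (rule eq_matI) (auto simp: circulant_def cyclic_diff_eq_0_iff)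

lemma cyclic_conv_unit_vec_right: "0 < n \<Longrightarrow> dim_vec v = n \<Longrightarrow> cyclic_conv n v (unit_vec n 0) = v"
  by (simp add: vec_mat_mult_circulant[symmetric] circulant_unit_vec vec_mat_mult_one)

lemma cyclic_conv_unit_vec_left: "0 < n \<Longrightarrow> dim_vec v = n \<Longrightarrow> cyclic_conv n (unit_vec n 0) v = v"
  by (simp add: cyclic_conv_commute[of n "unit_vec n 0"] cyclic_conv_unit_vec_right)

lemma cyclic_conv_smult_left: "dim_vec v = n \<Longrightarrow> cyclic_conv n (a \<cdot>\<^sub>v v) w = a \<cdot>\<^sub>v cyclic_conv n v w"
  by (rule eq_vecI) (auto simp: index_cyclic_conv sum_distrib_left mult.assoc)

lemma is_subfield_UNIV: "is_subfield UNIV"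
  by (simp add: is_subfield_def)

lemma subfield_sum: "is_subfield K \<Longrightarrow> (\<And>i. i \<in> A \<Longrightarrow> f i \<in> K) \<Longrightarrow> sum f A \<in> K"
  by (induction A rule: infinite_finite_induct) (auto simp: is_subfield_def)

lemma subfield_card_ge_2: "is_subfield (K :: 'a::field set) \<Longrightarrow> finite K \<Longrightarrow> 2 \<le> card K"
  using card_mono[of K "{0, 1}"] by (simp add: is_subfield_def)

lemma cyclic_conv_over_subfield:
  "is_subfield K \<Longrightarrow> \<forall>i<n. v $ i \<in> K \<Longrightarrow> \<forall>i<n. w $ i \<in> K \<Longrightarrow> \<forall>i<n. cyclic_conv n v w $ i \<in> K"
  by (auto simp: index_cyclic_conv is_subfield_def intro!: subfield_sum)

definition conv_units :: "'a::comm_ring_1 set \<Rightarrow> nat \<Rightarrow> 'a vec set" where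
  "conv_units K n = {v \<in> carrier_vec n. (\<forall>i<n. v $ i \<in> K) \<and>
     (\<exists>u \<in> carrier_vec n. (\<forall>i<n. u $ i \<in> K) \<and> cyclic_conv n v u = unit_vec n 0)}"

lemma conv_units_carrier: "v \<in> conv_units K n \<Longrightarrow> v \<in> carrier_vec n"
  by (simp add: conv_units_def)

lemma conv_units_subset_UNIV: "conv_units K n \<subseteq> conv_units UNIV n"
  by (auto simp: conv_units_def)

lemma finite_carrier_vec: "finite (carrier_vec n :: 'a::finite vec set)"
proof -
  have "carrier_vec n \<subseteq> vec_of_list ` {xs :: 'a list. set xs \<subseteq> UNIV \<and> length xs = n}"
  proof
    fix v :: "'a vec" assume "v \<in> carrier_vec n"
    then show "v \<in> vec_of_list ` {xs. set xs \<subseteq> UNIV \<and> length xs = n}"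
      by (intro image_eqI[where x = "list_of_vec v"]) (auto simp: vec_list)
  qed
  moreover have "finite {xs :: 'a list. set xs \<subseteq> UNIV \<and> length xs = n}"
    by (rule finite_lists_length_eq) simp
  ultimately show ?thesis by (meson finite_imageI finite_subset)
qed

lemma finite_conv_units: "finite (conv_units K n :: 'a::{finite,comm_ring_1} vec set)"
  by (rule finite_subset[OF _ finite_carrier_vec]) (auto simp: conv_units_def)

context
  fixes K :: "'a::field set" and n :: nat
  assumes K: "is_subfield K" and n: "0 < n"
begin

lemma unit_vec_in_conv_units: "unit_vec n 0 \<in> conv_units K n"
  using K n unfolding conv_units_def is_subfield_def
  by (auto intro!: bexI[of _ "unit_vec n 0"] simp: cyclic_conv_unit_vec_right)

lemma cyclic_conv_in_conv_units:
  assumes v: "v \<in> conv_units K n" and w: "w \<in> conv_units K n"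
  shows "cyclic_conv n v w \<in> conv_units K n"
proof -
  obtain u u' where u: "u \<in> carrier_vec n" "\<forall>i<n. u $ i \<in> K" "cyclic_conv n v u = unit_vec n 0"
    and u': "u' \<in> carrier_vec n" "\<forall>i<n. u' $ i \<in> K" "cyclic_conv n w u' = unit_vec n 0"
    using v w by (auto simp: conv_units_def)
  have "cyclic_conv n (cyclic_conv n v w) (cyclic_conv n u u')
      = cyclic_conv n (cyclic_conv n v u) (cyclic_conv n w u')"
    using v w u(1) by (simp add: cyclic_conv_interchange conv_units_def)
  also have "\<dots> = unit_vec n 0" using u(3) u'(3) n by (simp add: cyclic_conv_unit_vec_right)
  moreover have "\<forall>i<n. cyclic_conv n v w $ i \<in> K" "\<forall>i<n. cyclic_conv n u u' $ i \<in> K"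
    using v w u(2) u'(2) cyclic_conv_over_subfield[OF K] by (auto simp: conv_units_def)
  ultimately show ?thesis by (auto simp: conv_units_def intro!: bexI[of _ "cyclic_conv n u u'"])
qed

lemma conv_units_inverse:
  assumes v: "v \<in> conv_units K n"
  shows "\<exists>u \<in> conv_units K n. cyclic_conv n v u = unit_vec n 0"
proof -
  obtain u where u: "u \<in> carrier_vec n" "\<forall>i<n. u $ i \<in> K" "cyclic_conv n v u = unit_vec n 0"
    using v by (auto simp: conv_units_def)
  have "cyclic_conv n u v = unit_vec n 0" using u(3) by (simp add: cyclic_conv_commute)
  then have "u \<in> conv_units K n" using u v by (auto simp: conv_units_def)
  then show ?thesis using u(3) by blast
qed

lemma cyclic_conv_cancel_left:
  assumes v: "v \<in> conv_units K n" and "a \<in> carrier_vec n" "b \<in> carrier_vec n"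
    and "cyclic_conv n v a = cyclic_conv n v b"
  shows "a = b"
proof -
  obtain u where u: "u \<in> conv_units K n" "cyclic_conv n u v = unit_vec n 0"
    using conv_units_inverse[OF v] by (auto simp: cyclic_conv_commute[of n v])
  have "dim_vec u = n" using u(1) by (simp add: conv_units_def)
  then have "cyclic_conv n (cyclic_conv n u v) a = cyclic_conv n (cyclic_conv n u v) b"
    using assms(4) by (simp add: cyclic_conv_assoc)
  then show ?thesis using u(2) assms(2,3) n by (simp add: cyclic_conv_unit_vec_left)
qed

lemma image_cyclic_conv_conv_units:
  assumes w: "w \<in> conv_units K n"
  shows "cyclic_conv n w ` conv_units K n = conv_units K n"
proof
  show "cyclic_conv n w ` conv_units K n \<subseteq> conv_units K n"
    using cyclic_conv_in_conv_units[OF w] by blast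
  show "conv_units K n \<subseteq> cyclic_conv n w ` conv_units K n"
  proof
    fix y assume y: "y \<in> conv_units K n"
    obtain w' where w': "w' \<in> conv_units K n" "cyclic_conv n w w' = unit_vec n 0"
      using conv_units_inverse[OF w] by blast
    have "cyclic_conv n w (cyclic_conv n w' y) = y"
      using w w' y n by (simp add: cyclic_conv_assoc[symmetric] conv_units_def cyclic_conv_unit_vec_left)
    then show "y \<in> cyclic_conv n w ` conv_units K n"
      using cyclic_conv_in_conv_units[OF w'(1) y] by (metis image_eqI)
  qed
qed

lemma smult_in_conv_units:
  assumes k: "k \<in> K" "k \<noteq> 0" and w: "w \<in> conv_units K n"
  shows "k \<cdot>\<^sub>v w \<in> conv_units K n"
proof -
  obtain u where u: "u \<in> conv_units K n" "cyclic_conv n w u = unit_vec n 0"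
    using conv_units_inverse[OF w] by blast
  have dims: "dim_vec w = n" "dim_vec u = n" using w u(1) by (auto simp: conv_units_def)
  have "cyclic_conv n (k \<cdot>\<^sub>v w) (inverse k \<cdot>\<^sub>v u) = k \<cdot>\<^sub>v (inverse k \<cdot>\<^sub>v cyclic_conv n w u)"
    using dims by (simp add: cyclic_conv_smult_left cyclic_conv_commute[of n w])
  also have "\<dots> = unit_vec n 0" using k u(2) by (simp add: smult_smult_assoc)
  finally show ?thesis
    using k w u(1) K unfolding conv_units_def is_subfield_def
    by (auto intro!: bexI[of _ "inverse k \<cdot>\<^sub>v u"])
qed

lemma circulant_in_GL_over_iff:
  assumes v: "v \<in> carrier_vec n" and vK: "\<forall>i<n. v $ i \<in> K"
  shows "circulant n v \<in> GL_over K n \<longleftrightarrow> v \<in> conv_units K n"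
proof
  assume "circulant n v \<in> GL_over K n"
  then obtain B where B: "B \<in> carrier_mat n n" "mat_over K B" "B * circulant n v = 1\<^sub>m n"
    unfolding GL_over_def by blast
  \<comment> \<open>the convolution inverse of v is the first row of the matrix inverse\<close>
  define u where "u = vec_mat_mult (unit_vec n 0) B"
  have u: "u \<in> carrier_vec n" "\<forall>i<n. u $ i \<in> K"
    using B(1,2) n by (auto simp: u_def vec_mat_mult_def mat_over_def)
  have "cyclic_conv n u v = vec_mat_mult u (circulant n v)"
    using u(1) by (simp add: vec_mat_mult_circulant)
  also have "\<dots> = vec_mat_mult (unit_vec n 0) (B * circulant n v)"
    unfolding u_def using B(1) by (intro vec_mat_mult_assoc) (auto simp: circulant_def)
  also have "\<dots> = unit_vec n 0" using B(3) by (simp add: vec_mat_mult_one)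
  finally show "v \<in> conv_units K n"
    using u v vK by (auto simp: conv_units_def cyclic_conv_commute[of n u])
next
  assume "v \<in> conv_units K n"
  then obtain u where u: "u \<in> carrier_vec n" "\<forall>i<n. u $ i \<in> K" "cyclic_conv n v u = unit_vec n 0"
    by (auto simp: conv_units_def)
  then have "circulant n v * circulant n u = 1\<^sub>m n" "circulant n u * circulant n v = 1\<^sub>m n"
    using n by (simp_all add: circulant_mult circulant_unit_vec cyclic_conv_commute[of n u])
  then show "circulant n v \<in> GL_over K n"
    using u vK by (auto simp: GL_over_def mat_over_def circulant_def intro!: bexI[of _ "circulant n u"])
qed

lemma eq_class_eq_image:
  assumes v: "v \<in> carrier_vec n"
  shows "eq_class K n v = cyclic_conv n v ` conv_units K n"
proof -
  have "eq_class K n v = (\<lambda>w. vec_mat_mult v (circulant n w)) `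
      {w \<in> carrier_vec n. (\<forall>i<n. w $ i \<in> K) \<and> circulant n w \<in> GL_over K n}"
    unfolding eq_class_def by blast
  also have "{w \<in> carrier_vec n. (\<forall>i<n. w $ i \<in> K) \<and> circulant n w \<in> GL_over K n} = conv_units K n"
    using circulant_in_GL_over_iff by (auto simp: conv_units_def)
  finally show ?thesis using v by (simp add: vec_mat_mult_circulant)
qed

end

lemma card_eq_mult_card_image:
  assumes "finite A" and "\<forall>x\<in>A. card {y \<in> A. f y = f x} = k"
  shows "card A = k * card (f ` A)"
proof -
  have "card A = (\<Sum>z\<in>f ` A. card {y \<in> A. f y = z})"
    using sum.image_gen[OF assms(1), of "\<lambda>_. 1 :: nat" f] by (simp only: card_eq_sum)
  also have "\<dots> = (\<Sum>z\<in>f ` A. k)"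
    using assms(2) by (intro sum.cong) auto
  finally show ?thesis by simp
qed

definition K_proportional :: "'a::times set \<Rightarrow> nat \<Rightarrow> 'a vec \<Rightarrow> bool" where
  "K_proportional K n v \<longleftrightarrow> (\<exists>a x. x \<in> carrier_vec n \<and> (\<forall>i<n. x $ i \<in> K) \<and> v = a \<cdot>\<^sub>v x)"

context
  fixes K :: "'a::field set" and n :: nat
  assumes K: "is_subfield K" and n: "0 < n"
begin

lemma mem_eq_class_self: "v \<in> carrier_vec n \<Longrightarrow> v \<in> eq_class K n v"
  using eq_class_eq_image[OF K n] unit_vec_in_conv_units[OF K n] n
  by (force simp: cyclic_conv_unit_vec_right)

lemma eq_class_eq_of_mem:
  assumes v: "v \<in> carrier_vec n" and w: "w \<in> eq_class K n v"
  shows "eq_class K n w = eq_class K n v"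
proof -
  obtain u where u: "u \<in> conv_units K n" "w = cyclic_conv n v u"
    using w eq_class_eq_image[OF K n v] by blast
  have "eq_class K n w = cyclic_conv n (cyclic_conv n v u) ` conv_units K n"
    using u(2) by (simp add: eq_class_eq_image[OF K n])
  also have "\<dots> = cyclic_conv n v ` (cyclic_conv n u ` conv_units K n)"
    unfolding image_image using v by (intro image_cong) (simp_all add: cyclic_conv_assoc)
  also have "\<dots> = eq_class K n v"
    using u(1) v by (simp add: image_cyclic_conv_conv_units[OF K n] eq_class_eq_image[OF K n])
  finally show ?thesis .
qed

lemma eq_class_subset_conv_units:
  assumes v: "v \<in> conv_units UNIV n"
  shows "eq_class K n v \<subseteq> conv_units UNIV n"
proof -
  have "eq_class K n v = cyclic_conv n v ` conv_units K n"
    using v by (simp add: eq_class_eq_image[OF K n] conv_units_carrier)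
  also have "\<dots> \<subseteq> conv_units UNIV n"
    using v conv_units_subset_UNIV cyclic_conv_in_conv_units[OF is_subfield_UNIV n] by blast
  finally show ?thesis .
qed

lemma K_proportional_cyclic_conv:
  assumes v: "v \<in> carrier_vec n" "K_proportional K n v" and w: "w \<in> conv_units K n"
  shows "K_proportional K n (cyclic_conv n v w)"
proof -
  obtain a x where x: "x \<in> carrier_vec n" "\<forall>i<n. x $ i \<in> K" "v = a \<cdot>\<^sub>v x"
    using v(2) by (auto simp: K_proportional_def)
  have "cyclic_conv n v w = a \<cdot>\<^sub>v cyclic_conv n x w"
    using x by (simp add: cyclic_conv_smult_left)
  moreover have "\<forall>i<n. cyclic_conv n x w $ i \<in> K"
    using cyclic_conv_over_subfield[OF K] x(2) w by (simp add: conv_units_def)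
  ultimately show ?thesis
    unfolding K_proportional_def by (intro exI[of _ a] exI[of _ "cyclic_conv n x w"]) simp
qed

lemma eq_class_smult:
  assumes x: "x \<in> conv_units K n"
  shows "eq_class K n (a \<cdot>\<^sub>v x) = (\<lambda>w. a \<cdot>\<^sub>v w) ` conv_units K n"
proof -
  have "x \<in> carrier_vec n" using x by (rule conv_units_carrier)
  then have "eq_class K n (a \<cdot>\<^sub>v x) = (\<lambda>w. a \<cdot>\<^sub>v w) ` (cyclic_conv n x ` conv_units K n)"
    by (simp add: eq_class_eq_image[OF K n] image_image cyclic_conv_smult_left)
  then show ?thesis using image_cyclic_conv_conv_units[OF K n x] by simp
qed

lemma smult_conv_units_eq_iff:
  assumes "b \<noteq> 0"
  shows "(\<lambda>w. b \<cdot>\<^sub>v w) ` conv_units K n = (\<lambda>w. a \<cdot>\<^sub>v w) ` conv_units K n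
    \<longleftrightarrow> b \<in> (\<lambda>k. a * k) ` (K - {0})"
proof
  assume eq: "(\<lambda>w. b \<cdot>\<^sub>v w) ` conv_units K n = (\<lambda>w. a \<cdot>\<^sub>v w) ` conv_units K n"
  then have "b \<cdot>\<^sub>v unit_vec n 0 \<in> (\<lambda>w. a \<cdot>\<^sub>v w) ` conv_units K n"
    using unit_vec_in_conv_units[OF K n] by blast
  then obtain w where w: "w \<in> conv_units K n" "b \<cdot>\<^sub>v unit_vec n 0 = a \<cdot>\<^sub>v w" by blast
  then have "b = a * w $ 0" "w $ 0 \<in> K"
    using n by (auto simp: conv_units_def dest!: arg_cong[where f = "\<lambda>v. v $ 0"])
  then show "b \<in> (\<lambda>k. a * k) ` (K - {0})" using assms by auto
next
  assume "b \<in> (\<lambda>k. a * k) ` (K - {0})"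
  then obtain k where k: "k \<in> K" "k \<noteq> 0" "b = a * k" by auto
  have "(\<lambda>w. k \<cdot>\<^sub>v w) ` conv_units K n = conv_units K n"
  proof (intro equalityI subsetI)
    fix y assume "y \<in> conv_units K n"
    moreover have "inverse k \<in> K" using K k by (simp add: is_subfield_def)
    ultimately have "inverse k \<cdot>\<^sub>v y \<in> conv_units K n" and "y = k \<cdot>\<^sub>v (inverse k \<cdot>\<^sub>v y)"
      using k smult_in_conv_units[OF K n] by (auto simp: smult_smult_assoc)
    then show "y \<in> (\<lambda>w. k \<cdot>\<^sub>v w) ` conv_units K n" by blast
  qed (use smult_in_conv_units[OF K n k(1,2)] in blast)
  moreover have "(\<lambda>w. b \<cdot>\<^sub>v w) ` conv_units K n = (\<lambda>w. a \<cdot>\<^sub>v w) ` ((\<lambda>w. k \<cdot>\<^sub>v w) ` conv_units K n)"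
    using k(3) by (simp add: image_image smult_smult_assoc)
  ultimately show "(\<lambda>w. b \<cdot>\<^sub>v w) ` conv_units K n = (\<lambda>w. a \<cdot>\<^sub>v w) ` conv_units K n"
    by simp
qed

end

lemma smult_in_conv_units_UNIVD:
  assumes n: "0 < n" and x: "x \<in> carrier_vec n" and ax: "a \<cdot>\<^sub>v x \<in> conv_units UNIV n"
  shows "a \<noteq> 0" and "x \<in> conv_units UNIV n"
proof -
  obtain u where u: "u \<in> carrier_vec n" "cyclic_conv n (a \<cdot>\<^sub>v x) u = unit_vec n 0"
    using ax by (auto simp: conv_units_def)
  then have axu: "a \<cdot>\<^sub>v cyclic_conv n x u = unit_vec n 0"
    using x by (simp add: cyclic_conv_smult_left)
  then have "a * cyclic_conv n x u $ 0 = 1"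
    using n by (metis index_smult_vec(1) index_unit_vec(1) cyclic_conv_carrier(2))
  then show "a \<noteq> 0" by auto
  have "cyclic_conv n x (a \<cdot>\<^sub>v u) = a \<cdot>\<^sub>v cyclic_conv n x u"
    using u(1) by (simp add: cyclic_conv_commute[of n x] cyclic_conv_smult_left)
  then show "x \<in> conv_units UNIV n"
    using x u(1) axu by (auto simp: conv_units_def intro!: bexI[of _ "a \<cdot>\<^sub>v u"])
qed

context
  fixes K :: "'a::{field,finite} set" and n :: nat
  assumes K: "is_subfield K" and n: "0 < n"
begin

lemma card_conv_units_eq_mult_card_classes:
  "card (conv_units (UNIV :: 'a set) n)
     = card (conv_units K n) * card (eq_class K n ` conv_units UNIV n)"
proof (rule card_eq_mult_card_image[OF finite_conv_units], intro ballI)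
  fix v :: "'a vec" assume v: "v \<in> conv_units UNIV n"
  then have vc: "v \<in> carrier_vec n" by (rule conv_units_carrier)
  have "{w \<in> conv_units UNIV n. eq_class K n w = eq_class K n v} = eq_class K n v"
  proof (intro equalityI subsetI)
    fix w assume "w \<in> {w \<in> conv_units UNIV n. eq_class K n w = eq_class K n v}"
    then show "w \<in> eq_class K n v" using mem_eq_class_self[OF K n conv_units_carrier] by auto
  next
    fix w assume "w \<in> eq_class K n v"
    then show "w \<in> {w \<in> conv_units UNIV n. eq_class K n w = eq_class K n v}"
      using eq_class_eq_of_mem[OF K n vc] eq_class_subset_conv_units[OF K n v] by auto
  qed
  moreover have "inj_on (cyclic_conv n v) (conv_units K n)"
    using cyclic_conv_cancel_left[OF is_subfield_UNIV n v] conv_units_carrier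
    by (metis inj_onI)
  ultimately show "card {w \<in> conv_units UNIV n. eq_class K n w = eq_class K n v} = card (conv_units K n)"
    by (simp add: eq_class_eq_image[OF K n vc] card_image)
qed

lemma conv_units_of_K_valued:
  assumes x: "x \<in> conv_units UNIV n" and xK: "\<forall>i<n. x $ i \<in> K"
  shows "x \<in> conv_units K n"
proof -
  define V where "V = {y \<in> carrier_vec n. \<forall>i<n. y $ i \<in> K}"
  \<comment> \<open>convolution by x permutes the finite set of K-valued vectors, so it hits the unit\<close>
  have "cyclic_conv n x ` V = V"
  proof (rule endo_inj_surj)
    show "finite V" unfolding V_def by (rule finite_subset[OF _ finite_carrier_vec]) auto
    show "cyclic_conv n x ` V \<subseteq> V"
      unfolding V_def using cyclic_conv_over_subfield[OF K] xK by auto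
    show "inj_on (cyclic_conv n x) V"
      using cyclic_conv_cancel_left[OF is_subfield_UNIV n x] by (auto intro: inj_onI simp: V_def)
  qed
  moreover have "unit_vec n 0 \<in> V"
    using K by (auto simp: V_def is_subfield_def)
  ultimately obtain y where "y \<in> V" "cyclic_conv n x y = unit_vec n 0"
    by (metis imageE)
  then show ?thesis using x xK by (auto simp: conv_units_def V_def)
qed

lemma card_classes_K_proportional:
  "card (UNIV :: 'a set) - 1
     = (card K - 1) * card (eq_class K n ` {v \<in> conv_units UNIV n. K_proportional K n v})"
proof -
  define g where "g a = (\<lambda>w. a \<cdot>\<^sub>v w) ` conv_units K n" for a :: 'a
  have "eq_class K n ` {v \<in> conv_units UNIV n. K_proportional K n v} = g ` (UNIV - {0})"
  proof (intro equalityI subsetI)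
    fix c assume "c \<in> eq_class K n ` {v \<in> conv_units UNIV n. K_proportional K n v}"
    then obtain a x where x: "x \<in> carrier_vec n" "\<forall>i<n. x $ i \<in> K" "a \<cdot>\<^sub>v x \<in> conv_units UNIV n"
      and c: "c = eq_class K n (a \<cdot>\<^sub>v x)"
      by (auto simp: K_proportional_def)
    have "x \<in> conv_units K n"
      using conv_units_of_K_valued smult_in_conv_units_UNIVD(2)[OF n x(1,3)] x(2) by blast
    then show "c \<in> g ` (UNIV - {0})"
      using c smult_in_conv_units_UNIVD(1)[OF n x(1,3)] by (simp add: eq_class_smult[OF K n] g_def)
  next
    fix c assume "c \<in> g ` (UNIV - {0})"
    then obtain a where a: "a \<noteq> 0" "c = g a" by auto
    have "a \<cdot>\<^sub>v unit_vec n 0 \<in> conv_units UNIV n"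
      using a(1) unit_vec_in_conv_units[OF is_subfield_UNIV n]
      by (intro smult_in_conv_units[OF is_subfield_UNIV n]) auto
    moreover have "K_proportional K n (a \<cdot>\<^sub>v unit_vec n 0)"
      unfolding K_proportional_def using unit_vec_in_conv_units[OF K n]
      by (intro exI[of _ a] exI[of _ "unit_vec n 0"]) (simp add: conv_units_def)
    moreover have "c = eq_class K n (a \<cdot>\<^sub>v unit_vec n 0)"
      using a(2) unit_vec_in_conv_units[OF K n] by (simp add: eq_class_smult[OF K n] g_def)
    ultimately show "c \<in> eq_class K n ` {v \<in> conv_units UNIV n. K_proportional K n v}" by blast
  qed
  moreover have "card (UNIV - {0 :: 'a}) = (card K - 1) * card (g ` (UNIV - {0}))"
  proof (rule card_eq_mult_card_image, simp, intro ballI)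
    fix a :: 'a assume "a \<in> UNIV - {0}"
    then have "b \<in> UNIV - {0} \<and> g b = g a \<longleftrightarrow> b \<in> (\<lambda>k. a * k) ` (K - {0})" for b
      using smult_conv_units_eq_iff[OF K n, where a = a and b = b] by (cases "b = 0") (auto simp: g_def)
    then have "{b \<in> UNIV - {0}. g b = g a} = (\<lambda>k. a * k) ` (K - {0})" by blast
    moreover have "inj_on (\<lambda>k. a * k) (K - {0})" using \<open>a \<in> UNIV - {0}\<close> by (auto intro: inj_onI)
    ultimately show "card {b \<in> UNIV - {0}. g b = g a} = card K - 1"
      using K by (simp add: card_image is_subfield_def)
  qed
  ultimately show ?thesis by (simp add: card_Diff_singleton)
qed

lemma card_classes_split_K_proportional:
  "card (eq_class K n ` conv_units UNIV n)
     = card (eq_class K n ` {v \<in> conv_units UNIV n. \<not> K_proportional K n v})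
       + card (eq_class K n ` {v \<in> conv_units UNIV n. K_proportional K n v})"
proof -
  have "eq_class K n t \<noteq> eq_class K n v"
    if t: "t \<in> conv_units UNIV n" "\<not> K_proportional K n t"
      and v: "v \<in> conv_units UNIV n" "K_proportional K n v" for t v
  proof
    assume "eq_class K n t = eq_class K n v"
    then have "t \<in> cyclic_conv n v ` conv_units K n"
      using mem_eq_class_self[OF K n] eq_class_eq_image[OF K n] t(1) v(1) conv_units_carrier by metis
    then show False
      using K_proportional_cyclic_conv[OF K n conv_units_carrier[OF v(1)] v(2)] t(2) by blast
  qed
  then have "eq_class K n ` {v \<in> conv_units UNIV n. \<not> K_proportional K n v}
      \<inter> eq_class K n ` {v \<in> conv_units UNIV n. K_proportional K n v} = {}"
    by blast
  moreover have "eq_class K n ` conv_units UNIV n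
      = eq_class K n ` {v \<in> conv_units UNIV n. \<not> K_proportional K n v}
        \<union> eq_class K n ` {v \<in> conv_units UNIV n. K_proportional K n v}"
    by blast
  moreover have "finite (eq_class K n ` {v \<in> conv_units UNIV n. P v})" for P :: "'a vec \<Rightarrow> bool"
    using finite_conv_units[of "UNIV :: 'a set" n] by simp
  ultimately show ?thesis by (simp add: card_Un_disjoint)
qed

end

lemma K_proportional_iff_span_le_1:
  fixes K :: "'a::field set"
  assumes K: "is_subfield K" and v: "v \<in> carrier_vec n"
  shows "K_proportional K n v \<longleftrightarrow> (\<exists>B. finite B \<and> card B \<le> 1 \<and> (\<forall>i<n. v $ i \<in> K_span K B))"
proof
  assume "K_proportional K n v"
  then obtain a x where x: "x \<in> carrier_vec n" "\<forall>i<n. x $ i \<in> K" "v = a \<cdot>\<^sub>v x"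
    by (auto simp: K_proportional_def)
  then have "\<forall>i<n. v $ i \<in> K_span K {a}"
    by (auto simp: K_span_def mult.commute)
  then show "\<exists>B. finite B \<and> card B \<le> 1 \<and> (\<forall>i<n. v $ i \<in> K_span K B)"
    by (intro exI[of _ "{a}"]) simp
next
  assume "\<exists>B. finite B \<and> card B \<le> 1 \<and> (\<forall>i<n. v $ i \<in> K_span K B)"
  then obtain B where B: "finite B" "card B \<le> 1" "\<forall>i<n. v $ i \<in> K_span K B" by blast
  \<comment> \<open>an empty spanning set forces v = 0, which is covered by the generator b = 0\<close>
  obtain b where b: "\<forall>i<n. \<exists>c\<in>K. v $ i = c * b"
  proof (cases "B = {}")
    case True
    moreover have "0 \<in> K" using K by (simp add: is_subfield_def)
    ultimately show ?thesis using B(3) that[of 0] by (auto simp: K_span_def)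
  next
    case False
    then have "card B \<noteq> 0" using B(1) by simp
    then have "card B = 1" using B(2) by linarith
    then obtain b where "B = {b}" by (rule card_1_singletonE)
    then show ?thesis using B(3) that[of b] by (auto simp: K_span_def)
  qed
  define x where "x = vec n (\<lambda>i. SOME c. c \<in> K \<and> v $ i = c * b)"
  have "\<forall>i<n. x $ i \<in> K \<and> v $ i = x $ i * b"
    unfolding x_def using b by (auto intro: someI2_bex)
  then have "x \<in> carrier_vec n" "\<forall>i<n. x $ i \<in> K" "v = b \<cdot>\<^sub>v x"
    using v by (auto simp: x_def mult.commute intro!: eq_vecI)
  then show "K_proportional K n v" by (auto simp: K_proportional_def)
qed

lemma wt_over_eq_2_iff:
  fixes K :: "'a::field set"
  assumes K: "is_subfield K" and \<alpha>: "\<alpha> \<notin> K" and span: "\<forall>z. \<exists>x\<in>K. \<exists>y\<in>K. z = x + y * \<alpha>"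
    and v: "v \<in> carrier_vec n"
  shows "wt_over K v = 2 \<longleftrightarrow> \<not> K_proportional K n v"
proof -
  let ?Q = "\<lambda>d. \<exists>B. finite B \<and> card B = d \<and> (\<forall>i<dim_vec v. v $ i \<in> K_span K B)"
  have "?Q 2"
  proof (intro exI conjI allI impI)
    have "1 \<noteq> \<alpha>" using K \<alpha> by (auto simp: is_subfield_def)
    then show "finite {1, \<alpha>}" "card {1, \<alpha>} = 2" by auto
    fix i
    obtain x y where "x \<in> K" "y \<in> K" "v $ i = x + y * \<alpha>" using span by blast
    with \<open>1 \<noteq> \<alpha>\<close> show "v $ i \<in> K_span K {1, \<alpha>}"
      unfolding K_span_def by (auto intro!: exI[of _ "\<lambda>b. if b = 1 then x else y"])
  qed
  then have le_2: "wt_over K v \<le> 2" and attained: "?Q (wt_over K v)"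
    unfolding wt_over_def by (auto intro: Least_le LeastI)
  have least: "?Q d \<Longrightarrow> wt_over K v \<le> d" for d
    unfolding wt_over_def by (rule Least_le)
  have proportional: "K_proportional K n v \<longleftrightarrow> (\<exists>d\<le>1. ?Q d)"
    using K_proportional_iff_span_le_1[OF K v] v by auto
  show ?thesis
  proof
    assume wt: "wt_over K v = 2"
    show "\<not> K_proportional K n v"
    proof
      assume "K_proportional K n v"
      then obtain d where d: "d \<le> 1" "?Q d" using proportional by blast
      then have "wt_over K v \<le> 1" using least[OF d(2)] by linarith
      then show False using wt by simp
    qed
  next
    assume "\<not> K_proportional K n v"
    then have "\<not> wt_over K v \<le> 1" using proportional attained by blast
    then show "wt_over K v = 2" using le_2 by linarith
  qed
qed

lemma decompose_over_quadratic_subfield: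
  fixes K :: "'a::{field,finite} set"
  assumes K: "is_subfield K" and \<alpha>: "\<alpha> \<notin> K" and card: "card (UNIV :: 'a set) = card K * card K"
  shows "\<exists>x\<in>K. \<exists>y\<in>K. z = x + y * \<alpha>"
proof -
  have "inj_on (\<lambda>(x, y). x + y * \<alpha>) (K \<times> K)"
  proof (rule inj_onI, clarify)
    fix x y x' y' assume xy: "x \<in> K" "y \<in> K" "x' \<in> K" "y' \<in> K" and eq: "x + y * \<alpha> = x' + y' * \<alpha>"
    have "y = y'"
    proof (rule ccontr)
      assume "y \<noteq> y'"
      then have "\<alpha> = (x' - x) * inverse (y - y')" using eq by (simp add: field_simps)
      moreover have "(x' - x) * inverse (y - y') \<in> K"
        using K xy \<open>y \<noteq> y'\<close> by (simp add: is_subfield_def)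
      ultimately show False using \<alpha> by simp
    qed
    with eq show "x = x' \<and> y = y'" by simp
  qed
  then have "card ((\<lambda>(x, y). x + y * \<alpha>) ` (K \<times> K)) = card (UNIV :: 'a set)"
    using card by (simp add: card_image card_cartesian_product)
  then have "(\<lambda>(x, y). x + y * \<alpha>) ` (K \<times> K) = UNIV"
    by (intro card_subset_eq) auto
  then have "z \<in> (\<lambda>(x, y). x + y * \<alpha>) ` (K \<times> K)" by simp
  then obtain p where "p \<in> K \<times> K" "z = (\<lambda>(x, y). x + y * \<alpha>) p" by (rule imageE)
  then show ?thesis by (cases p) auto
qed

theorem proposition7:
  fixes K :: "'a::{field,finite} set" and q m n :: nat
  assumes "\<exists>p k. prime p \<and> 0 < k \<and> q = p ^ k"
    and "0 < m" and "n = 2 * m"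
    and "card (UNIV :: 'a set) = q ^ n"
    and "is_subfield K" and "card K = q ^ m"
  defines "S1 \<equiv> {v \<in> carrier_vec n. circulant n v \<in> GL_over (UNIV :: 'a set) n}"
    and "S2 \<equiv> {v \<in> carrier_vec n. (\<forall>i<n. v $ i \<in> K) \<and> circulant n v \<in> GL_over K n}"
    and "T \<equiv> {v \<in> carrier_vec n. wt_over K v = 2 \<and> circulant n v \<in> GL_over (UNIV :: 'a set) n}"
  shows "real (card (eq_class K n ` T)) = real (card S1) / real (card S2) - real q ^ m - 1"
proof -
  have K: "is_subfield K" and n: "0 < n" using assms by simp_all
  have card_UNIV: "card (UNIV :: 'a set) = card K * card K"
    using assms by (simp add: mult_2 power_add)
  have card_K: "2 \<le> card K" using subfield_card_ge_2[OF K] by simp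
  then have "card K * 1 < card (UNIV :: 'a set)"
    unfolding card_UNIV by (intro mult_strict_left_mono) auto
  then obtain \<alpha> :: 'a where \<alpha>: "\<alpha> \<notin> K" by (metis UNIV_eq_I less_irrefl mult_1_right)
  have S1: "S1 = conv_units UNIV n"
    using circulant_in_GL_over_iff[OF is_subfield_UNIV n] by (auto simp: S1_def conv_units_def)
  have S2: "S2 = conv_units K n"
    using circulant_in_GL_over_iff[OF K n] by (auto simp: S2_def conv_units_def)
  have "T = {v \<in> S1. wt_over K v = 2}" by (auto simp: T_def S1_def)
  then have T: "T = {v \<in> conv_units UNIV n. \<not> K_proportional K n v}"
    using wt_over_eq_2_iff[OF K \<alpha> allI[OF decompose_over_quadratic_subfield[OF K \<alpha> card_UNIV]]]
    by (auto simp: S1 dest: conv_units_carrier)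
  have "(card K - 1) * card (eq_class K n ` {v \<in> conv_units UNIV n. K_proportional K n v})
      = (card K - 1) * (card K + 1)"
    using card_classes_K_proportional[OF K n] card_UNIV by (simp add: algebra_simps)
  then have "card (eq_class K n ` {v \<in> conv_units UNIV n. K_proportional K n v}) = card K + 1"
    using card_K by (metis mult_cancel1 diff_is_0_eq not_less_eq_eq numeral_2_eq_2 One_nat_def)
  then have "card (eq_class K n ` conv_units UNIV n) = card (eq_class K n ` T) + q ^ m + 1"
    using card_classes_split_K_proportional[OF K n] assms(6) T by simp
  moreover have "card S1 = card S2 * card (eq_class K n ` conv_units UNIV n)" and "0 < card S2"
    using card_conv_units_eq_mult_card_classes[OF K n] unit_vec_in_conv_units[OF K n] finite_conv_units
    by (auto simp: S1 S2 card_gt_0_iff)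
  ultimately show ?thesis by (simp add: field_simps)
qed

end
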